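(* For every $a\in\mathbb{S}$ and every finite tuple $u_1,\dots,u_i\in\mathbb{S}\setminus a^\perp$, there are infinitely many $b\in a^\perp$ such that for all $1\le j\le i$: $a\to u_j$ iff $b\to u_j$. Consequently, for any finite set $F\subseteq\mathbb{S}$ and any column $C$ of $\mathbb{S}$ disjoint from $F$, the subgroup of $\mathrm{Aut}(\mathbb{S})$ consisting of automorphisms fixing $F$ pointwise and $C$ setwise has no finite orbits on $C$.
   Context: Directed graphs are simple and loopless ($x\to y$ denotes a directed edge, at most one direction between two distinct vertices). $\mathcal{S}$ is the class of finite such graphs in which $x\perp y:\Leftrightarrow\neg(x\to y\vee y\to x)$ is an equivalence relation (its classes are called columns; $a^\perp$ denotes the column of $a$) and satisfying the parity condition: for $x_1\neq x_2$, $y_1\neq y_2$ with $x_1\perp x_2$, $y_1\perp y_2$, the number of directed edges from $\{x_1,x_2\}$ to $\{y_1,y_2\}$ is even. $\mathbb{S}$ (the semigeneric directed graph) is the Fraïssé limit of $\mathcal{S}$, i.e. the countable homogeneous directed graph whose finite induced substructures are exactly the members of $\mathcal{S}$ up to isomorphism. *)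

theory Defs
  imports Main "HOL-Library.Countable_Set"
begin

definition perp :: "('a \<Rightarrow> 'a \<Rightarrow> bool) \<Rightarrow> 'a \<Rightarrow> 'a \<Rightarrow> bool" where
  "perp E x y \<longleftrightarrow> \<not> (E x y \<or> E y x)"

definition simple_digraph :: "'a set \<Rightarrow> ('a \<Rightarrow> 'a \<Rightarrow> bool) \<Rightarrow> bool" where
  "simple_digraph A E \<longleftrightarrow> (\<forall>x\<in>A. \<not> E x x) \<and> (\<forall>x\<in>A. \<forall>y\<in>A. \<not> (E x y \<and> E y x))"

definition in_class_S :: "'a set \<Rightarrow> ('a \<Rightarrow> 'a \<Rightarrow> bool) \<Rightarrow> bool" where
  "in_class_S A E \<longleftrightarrow> finite A \<and> simple_digraph A E \<and>
     (\<forall>x\<in>A. perp E x x) \<and>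
     (\<forall>x\<in>A. \<forall>y\<in>A. perp E x y \<longrightarrow> perp E y x) \<and>
     (\<forall>x\<in>A. \<forall>y\<in>A. \<forall>z\<in>A. perp E x y \<longrightarrow> perp E y z \<longrightarrow> perp E x z) \<and>
     (\<forall>x1\<in>A. \<forall>x2\<in>A. \<forall>y1\<in>A. \<forall>y2\<in>A.
        x1 \<noteq> x2 \<longrightarrow> y1 \<noteq> y2 \<longrightarrow> perp E x1 x2 \<longrightarrow> perp E y1 y2 \<longrightarrow>
        even (card {(x, y). x \<in> {x1, x2} \<and> y \<in> {y1, y2} \<and> E x y}))"

definition is_aut :: "'a set \<Rightarrow> ('a \<Rightarrow> 'a \<Rightarrow> bool) \<Rightarrow> ('a \<Rightarrow> 'a) \<Rightarrow> bool" where
  "is_aut V E g \<longleftrightarrow> bij_betw g V V \<and> (\<forall>x\<in>V. \<forall>y\<in>V. E x y \<longleftrightarrow> E (g x) (g y))"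

definition homogeneous :: "'a set \<Rightarrow> ('a \<Rightarrow> 'a \<Rightarrow> bool) \<Rightarrow> bool" where
  "homogeneous V E \<longleftrightarrow> (\<forall>A B f. finite A \<and> A \<subseteq> V \<and> B \<subseteq> V \<and> bij_betw f A B \<and>
      (\<forall>x\<in>A. \<forall>y\<in>A. E x y \<longleftrightarrow> E (f x) (f y)) \<longrightarrow>
      (\<exists>g. is_aut V E g \<and> (\<forall>x\<in>A. g x = f x)))"

text \<open>Age of (V,E) is exactly S up to isomorphism: every finite induced
  substructure lies in S, and every member of S (represented on a finite set of
  naturals, which loses no generality) embeds as an induced substructure.\<close>
definition age_is_S :: "'a set \<Rightarrow> ('a \<Rightarrow> 'a \<Rightarrow> bool) \<Rightarrow> bool" where
  "age_is_S V E \<longleftrightarrow>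
     (\<forall>A. finite A \<and> A \<subseteq> V \<longrightarrow> in_class_S A E) \<and>
     (\<forall>(A :: nat set) R. in_class_S A R \<longrightarrow>
        (\<exists>f. inj_on f A \<and> f ` A \<subseteq> V \<and> (\<forall>x\<in>A. \<forall>y\<in>A. R x y \<longleftrightarrow> E (f x) (f y))))"

text \<open>(V,E) is (an isomorphic copy of) the semigeneric directed graph: the countable
  homogeneous digraph whose age is S (Fraisse limit, unique up to isomorphism).\<close>
definition semigeneric :: "'a set \<Rightarrow> ('a \<Rightarrow> 'a \<Rightarrow> bool) \<Rightarrow> bool" where
  "semigeneric V E \<longleftrightarrow> countable V \<and> homogeneous V E \<and> age_is_S V E"

definition column :: "'a set \<Rightarrow> ('a \<Rightarrow> 'a \<Rightarrow> bool) \<Rightarrow> 'a \<Rightarrow> 'a set" where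
  "column V E a = {x \<in> V. perp E a x}"

end

theory Submission
  imports Defs
begin

text \<open>Given a finite set A of vertices containing a, doubling a in A yields a structure in S
  (duplicating a vertex preserves the parity condition); it embeds into the graph, and homogeneity
  moves the embedding onto A, producing a twin of a outside A. Twins of a lie in its column, so
  the vertices of that column agreeing with a on a finite set cannot be finitely many. If b lies
  in the column of x and agrees with x on a finite set F outside it, then fixing F and sending x
  to b is a partial isomorphism, which homogeneity extends to an automorphism; it stabilises the
  column.\<close>

definition is_embedding ::
    "'b set \<Rightarrow> ('b \<Rightarrow> 'b \<Rightarrow> bool) \<Rightarrow> 'a set \<Rightarrow> ('a \<Rightarrow> 'a \<Rightarrow> bool) \<Rightarrow> ('b \<Rightarrow> 'a) \<Rightarrow> bool" where
  "is_embedding D R V E f \<longleftrightarrow>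
     inj_on f D \<and> f ` D \<subseteq> V \<and> (\<forall>x\<in>D. \<forall>y\<in>D. R x y \<longleftrightarrow> E (f x) (f y))"

lemma perp_sym: "perp E x y \<Longrightarrow> perp E y x"
  by (auto simp: perp_def)

lemma card_edges_between_pairs:
  assumes "x1 \<noteq> x2" "y1 \<noteq> y2"
  shows "card {(x, y). x \<in> {x1, x2} \<and> y \<in> {y1, y2} \<and> P x y} =
    of_bool (P x1 y1) + of_bool (P x1 y2) + of_bool (P x2 y1) + of_bool (P x2 y2)"
proof -
  have "{(x, y). x \<in> {x1, x2} \<and> y \<in> {y1, y2} \<and> P x y} =
     (if P x1 y1 then {(x1,y1)} else {}) \<union> (if P x1 y2 then {(x1,y2)} else {}) \<union>
     (if P x2 y1 then {(x2,y1)} else {}) \<union> (if P x2 y2 then {(x2,y2)} else {})"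
    (is "_ = ?S") by auto
  moreover have "card ?S =
      of_bool (P x1 y1) + of_bool (P x1 y2) + of_bool (P x2 y1) + of_bool (P x2 y2)"
    using assms
    by (cases "P x1 y1"; cases "P x1 y2"; cases "P x2 y1"; cases "P x2 y2")
      (simp_all add: card_insert_if)
  ultimately show ?thesis by simp
qed

lemma in_class_SD:
  assumes "in_class_S A E"
  shows "finite A" "\<And>x. x \<in> A \<Longrightarrow> \<not> E x x"
    "\<And>x y. x \<in> A \<Longrightarrow> y \<in> A \<Longrightarrow> \<not> (E x y \<and> E y x)"
    "\<And>x y z. x \<in> A \<Longrightarrow> y \<in> A \<Longrightarrow> z \<in> A \<Longrightarrow> perp E x y \<Longrightarrow> perp E y z \<Longrightarrow> perp E x z"
    "\<And>x1 x2 y1 y2. x1 \<in> A \<Longrightarrow> x2 \<in> A \<Longrightarrow> y1 \<in> A \<Longrightarrow> y2 \<in> A \<Longrightarrow>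
        x1 \<noteq> x2 \<Longrightarrow> y1 \<noteq> y2 \<Longrightarrow> perp E x1 x2 \<Longrightarrow> perp E y1 y2 \<Longrightarrow>
        even (card {(x, y). x \<in> {x1, x2} \<and> y \<in> {y1, y2} \<and> E x y})"
proof -
  note S = assms[unfolded in_class_S_def simple_digraph_def]
  from S show "finite A" by (elim conjE)
  from S show "\<And>x. x \<in> A \<Longrightarrow> \<not> E x x" by (elim conjE) blast
  from S show "\<And>x y. x \<in> A \<Longrightarrow> y \<in> A \<Longrightarrow> \<not> (E x y \<and> E y x)" by (elim conjE) blast
  from S show "\<And>x y z. x \<in> A \<Longrightarrow> y \<in> A \<Longrightarrow> z \<in> A \<Longrightarrow> perp E x y \<Longrightarrow> perp E y z \<Longrightarrow> perp E x z"
    by (elim conjE) blast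
  from S show "\<And>x1 x2 y1 y2. x1 \<in> A \<Longrightarrow> x2 \<in> A \<Longrightarrow> y1 \<in> A \<Longrightarrow> y2 \<in> A \<Longrightarrow>
        x1 \<noteq> x2 \<Longrightarrow> y1 \<noteq> y2 \<Longrightarrow> perp E x1 x2 \<Longrightarrow> perp E y1 y2 \<Longrightarrow>
        even (card {(x, y). x \<in> {x1, x2} \<and> y \<in> {y1, y2} \<and> E x y})"
    by (elim conjE) blast
qed

text \<open>The map c need not be injective: S is closed under duplicating vertices.\<close>
lemma in_class_S_pullback:
  assumes A: "in_class_S A E" and D: "finite D" and c: "c ` D \<subseteq> A"
  shows "in_class_S D (\<lambda>x y. E (c x) (c y))"
proof -
  let ?R = "\<lambda>x y. E (c x) (c y)"
  have perp_R: "perp ?R x y = perp E (c x) (c y)" for x y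
    by (simp add: perp_def)
  have cA: "x \<in> D \<Longrightarrow> c x \<in> A" for x
    using c by auto
  note A_props = in_class_SD[OF A]
  have parity: "even (card {(x, y). x \<in> {x1, x2} \<and> y \<in> {y1, y2} \<and> ?R x y})"
    if h: "x1 \<in> D" "x2 \<in> D" "y1 \<in> D" "y2 \<in> D" "x1 \<noteq> x2" "y1 \<noteq> y2"
       "perp ?R x1 x2" "perp ?R y1 y2" for x1 x2 y1 y2
  proof -
    have count: "card {(x, y). x \<in> {x1, x2} \<and> y \<in> {y1, y2} \<and> ?R x y} =
        of_bool (E (c x1) (c y1)) + of_bool (E (c x1) (c y2)) +
        of_bool (E (c x2) (c y1)) + of_bool (E (c x2) (c y2))"
      using card_edges_between_pairs[OF h(5,6), of ?R] by simp
    show ?thesis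
    proof (cases "c x1 = c x2 \<or> c y1 = c y2")
      case True
      then show ?thesis
        unfolding count by auto
    next
      case False
      have "even (card {(x, y). x \<in> {c x1, c x2} \<and> y \<in> {c y1, c y2} \<and> E x y})"
        using A_props(5) False h(1-4,7,8) cA unfolding perp_R by blast
      then show ?thesis
        unfolding count using False card_edges_between_pairs[of "c x1" "c x2" "c y1" "c y2" E]
        by simp
    qed
  qed
  have "\<forall>x\<in>D. \<not> ?R x x" "\<forall>x\<in>D. \<forall>y\<in>D. \<not> (?R x y \<and> ?R y x)"
    "\<forall>x\<in>D. perp ?R x x" "\<forall>x\<in>D. \<forall>y\<in>D. perp ?R x y \<longrightarrow> perp ?R y x"
    using A_props(2,3) cA by (auto simp: perp_def)
  moreover have "\<forall>x\<in>D. \<forall>y\<in>D. \<forall>z\<in>D. perp ?R x y \<longrightarrow> perp ?R y z \<longrightarrow> perp ?R x z"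
    unfolding perp_R using A_props(4) cA by blast
  ultimately show ?thesis
    unfolding in_class_S_def simple_digraph_def using D parity by blast
qed

lemma homogeneousD:
  assumes "homogeneous V E" "finite A" "A \<subseteq> V" "B \<subseteq> V" "bij_betw f A B"
    "\<forall>x\<in>A. \<forall>y\<in>A. E x y \<longleftrightarrow> E (f x) (f y)"
  shows "\<exists>g. is_aut V E g \<and> (\<forall>x\<in>A. g x = f x)"
  using assms unfolding homogeneous_def by blast

lemma semigeneric_in_class_S: "semigeneric V E \<Longrightarrow> finite A \<Longrightarrow> A \<subseteq> V \<Longrightarrow> in_class_S A E"
  unfolding semigeneric_def age_is_S_def by blast

lemma semigeneric_embeds_nat_class_S:
  "semigeneric V E \<Longrightarrow> in_class_S (A :: nat set) R \<Longrightarrow>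
    \<exists>f. inj_on f A \<and> f ` A \<subseteq> V \<and> (\<forall>x\<in>A. \<forall>y\<in>A. R x y \<longleftrightarrow> E (f x) (f y))"
  unfolding semigeneric_def age_is_S_def by blast

lemma semigeneric_homogeneous: "semigeneric V E \<Longrightarrow> homogeneous V E"
  unfolding semigeneric_def by blast

lemma semigeneric_irrefl: "semigeneric V E \<Longrightarrow> x \<in> V \<Longrightarrow> \<not> E x x"
  using in_class_SD(2)[OF semigeneric_in_class_S[of V E "{x}"]] by auto

lemma semigeneric_asym: "semigeneric V E \<Longrightarrow> x \<in> V \<Longrightarrow> y \<in> V \<Longrightarrow> \<not> (E x y \<and> E y x)"
  using in_class_SD(3)[OF semigeneric_in_class_S[of V E "{x, y}"]] by auto

lemma semigeneric_perp_trans: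
  "semigeneric V E \<Longrightarrow> x \<in> V \<Longrightarrow> y \<in> V \<Longrightarrow> z \<in> V \<Longrightarrow> perp E x y \<Longrightarrow> perp E y z \<Longrightarrow> perp E x z"
  using in_class_SD(4)[OF semigeneric_in_class_S[of V E "{x, y, z}"]] by auto

text \<open>The age condition only speaks about vertex sets of naturals; reindexing removes this.\<close>
lemma semigeneric_embeds_class_S:
  fixes D :: "'b set" and R :: "'b \<Rightarrow> 'b \<Rightarrow> bool"
  assumes sg: "semigeneric V E" and D: "in_class_S D R"
  shows "\<exists>f. is_embedding D R V E f"
proof -
  obtain e where e: "bij_betw e {..<card D} D"
    using ex_bij_betw_nat_finite[OF in_class_SD(1)[OF D]] by (auto simp: atLeast0LessThan)
  have "in_class_S {..<card D} (\<lambda>i j. R (e i) (e j))"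
    using e by (intro in_class_S_pullback[OF D]) (auto simp: bij_betw_def)
  then obtain f where f: "inj_on f {..<card D}" "f ` {..<card D} \<subseteq> V"
      "\<forall>i\<in>{..<card D}. \<forall>j\<in>{..<card D}. R (e i) (e j) \<longleftrightarrow> E (f i) (f j)"
    using semigeneric_embeds_nat_class_S[OF sg] by blast
  let ?e' = "inv_into {..<card D} e"
  have e': "bij_betw ?e' D {..<card D}"
    using e by (rule bij_betw_inv_into)
  have e_e': "e (?e' x) = x" if "x \<in> D" for x
    using f_inv_into_f[of x e] bij_betw_imp_surj_on[OF e] that by simp
  have "is_embedding D R V E (f \<circ> ?e')"
    unfolding is_embedding_def
  proof (intro conjI ballI)
    show "inj_on (f \<circ> ?e') D"
      using e'(1) f(1) by (simp add: bij_betw_def comp_inj_on)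
    show "(f \<circ> ?e') ` D \<subseteq> V"
      using e'(1) f(2) by (auto simp: bij_betw_def)
    show "R x y \<longleftrightarrow> E ((f \<circ> ?e') x) ((f \<circ> ?e') y)" if "x \<in> D" "y \<in> D" for x y
      using f(3) bij_betwE[OF e'] e_e' that by (metis comp_apply)
  qed
  then show ?thesis by blast
qed

lemma homogeneous_extend_embedding:
  assumes hom: "homogeneous V E" and D: "finite D" "D0 \<subseteq> D"
    and f: "is_embedding D R V E f" and h: "is_embedding D0 R V E h"
  shows "\<exists>k. is_embedding D R V E k \<and> (\<forall>x\<in>D0. k x = h x)"
proof -
  let ?p = "h \<circ> inv_into D0 f"
  have f_inj: "inj_on f D0"
    using f D(2) by (auto simp: is_embedding_def intro: inj_on_subset)
  have "bij_betw h D0 (h ` D0)"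
    using h by (simp add: is_embedding_def inj_on_imp_bij_betw)
  then have p_bij: "bij_betw ?p (f ` D0) (h ` D0)"
    using bij_betw_trans[OF bij_betw_inv_into[OF inj_on_imp_bij_betw[OF f_inj]]] by blast
  have p_f: "?p (f x) = h x" if "x \<in> D0" for x
    using f_inj that by simp
  have p_edges: "\<forall>x\<in>f ` D0. \<forall>y\<in>f ` D0. E x y \<longleftrightarrow> E (?p x) (?p y)"
  proof (intro ballI)
    fix x y assume "x \<in> f ` D0" "y \<in> f ` D0"
    then obtain x' y' where xy: "x' \<in> D0" "y' \<in> D0" "x = f x'" "y = f y'"
      by blast
    have "E (f x') (f y') \<longleftrightarrow> R x' y'"
      using f xy(1,2) D(2) unfolding is_embedding_def by blast
    also have "\<dots> \<longleftrightarrow> E (h x') (h y')"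
      using h xy(1,2) unfolding is_embedding_def by blast
    finally show "E x y \<longleftrightarrow> E (?p x) (?p y)"
      using xy f_inj by simp
  qed
  have "finite (f ` D0)"
    using finite_subset[OF D(2,1)] by simp
  moreover have "f ` D0 \<subseteq> V" "h ` D0 \<subseteq> V"
    using f h D(2) unfolding is_embedding_def by auto
  ultimately obtain g where g: "is_aut V E g" "\<forall>x\<in>f ` D0. g x = ?p x"
    using homogeneousD[OF hom _ _ _ p_bij p_edges] by blast
  have "inj_on g V" "g ` V = V" "\<forall>x\<in>V. \<forall>y\<in>V. E x y \<longleftrightarrow> E (g x) (g y)"
    using g(1) unfolding is_aut_def bij_betw_def by blast+
  then have "is_embedding D R V E (g \<circ> f)"
    using f unfolding is_embedding_def
    by (simp add: comp_inj_on inj_on_subset image_comp subset_iff) blast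
  moreover have "\<forall>x\<in>D0. (g \<circ> f) x = h x"
    using g(2) p_f by simp
  ultimately show ?thesis by blast
qed

lemma semigeneric_twin:
  assumes sg: "semigeneric V E" and A: "finite A" "A \<subseteq> V" "a \<in> A"
  shows "\<exists>b\<in>V - A. \<forall>x\<in>A. (E b x \<longleftrightarrow> E a x) \<and> (E x b \<longleftrightarrow> E x a)"
proof -
  define c where "c z = (case z of None \<Rightarrow> a | Some x \<Rightarrow> x)" for z
  let ?D = "insert None (Some ` A)"
  let ?R = "\<lambda>z z'. E (c z) (c z')"
  have "in_class_S ?D ?R"
    using A
    by (intro in_class_S_pullback[OF semigeneric_in_class_S[OF sg A(1,2)]])
      (auto simp: c_def)
  then obtain f where "is_embedding ?D ?R V E f"
    using semigeneric_embeds_class_S[OF sg] by blast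
  moreover have "is_embedding (Some ` A) ?R V E c"
    using A(2) by (auto simp: is_embedding_def c_def inj_on_def)
  ultimately obtain k where k: "is_embedding ?D ?R V E k" "\<forall>z\<in>Some ` A. k z = c z"
    using homogeneous_extend_embedding[OF semigeneric_homogeneous[OF sg], of ?D "Some ` A"] A(1)
    by blast
  then have k_Some: "\<forall>x\<in>A. k (Some x) = x"
    by (simp add: c_def)
  have "k None \<notin> A"
  proof
    assume "k None \<in> A"
    then have "k None = k (Some (k None))"
      using k_Some by simp
    then show False
      using k(1) \<open>k None \<in> A\<close> unfolding is_embedding_def inj_on_def by blast
  qed
  moreover have "k None \<in> V"
    using k(1) by (auto simp: is_embedding_def)
  moreover have "(E (k None) x \<longleftrightarrow> E a x) \<and> (E x (k None) \<longleftrightarrow> E x a)" if "x \<in> A" for x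
    using k that unfolding is_embedding_def by (auto simp: c_def)
  ultimately show ?thesis by blast
qed

lemma infinite_agreeing_in_column:
  assumes sg: "semigeneric V E" and a: "a \<in> V" and U: "finite U" "U \<subseteq> V"
  shows "infinite {b \<in> column V E a. \<forall>u\<in>U. E a u \<longleftrightarrow> E b u}" (is "infinite ?S")
proof
  assume "finite ?S"
  then have "finite (insert a (U \<union> ?S))"
    using U(1) by simp
  moreover have "insert a (U \<union> ?S) \<subseteq> V"
    using a U(2) by (auto simp: column_def)
  ultimately obtain b where b: "b \<in> V - insert a (U \<union> ?S)"
      "\<forall>x\<in>insert a (U \<union> ?S). (E b x \<longleftrightarrow> E a x) \<and> (E x b \<longleftrightarrow> E x a)"
    using semigeneric_twin[OF sg] by blast
  have "perp E a b"
    using b(2) semigeneric_irrefl[OF sg a] by (auto simp: perp_def)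
  then have "b \<in> ?S"
    using b by (auto simp: column_def)
  then show False
    using b(1) by blast
qed

lemma column_self: "semigeneric V E \<Longrightarrow> x \<in> V \<Longrightarrow> x \<in> column V E x"
  using semigeneric_irrefl by (fastforce simp: column_def perp_def)

lemma column_eq:
  assumes sg: "semigeneric V E" and z: "z \<in> V" and y: "y \<in> column V E z"
  shows "column V E y = column V E z"
proof -
  have yV: "y \<in> V" and zy: "perp E z y"
    using y by (auto simp: column_def)
  show ?thesis
    unfolding column_def
    using semigeneric_perp_trans[OF sg z yV _ zy] semigeneric_perp_trans[OF sg yV z _ perp_sym[OF zy]]
    by blast
qed

lemma aut_image_column:
  assumes g: "is_aut V E g" and x: "x \<in> V"
  shows "g ` column V E x = column V E (g x)"
proof -
  have g_bij: "bij_betw g V V"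
    using g by (simp add: is_aut_def)
  have perp_g: "perp E x y \<longleftrightarrow> perp E (g x) (g y)" if "y \<in> V" for y
    using g x that unfolding is_aut_def perp_def by blast
  show ?thesis
  proof
    show "g ` column V E x \<subseteq> column V E (g x)"
      using perp_g g_bij unfolding column_def bij_betw_def by auto
    show "column V E (g x) \<subseteq> g ` column V E x"
    proof
      fix z assume z: "z \<in> column V E (g x)"
      then obtain y where "y \<in> V" "z = g y"
        using g_bij unfolding column_def bij_betw_def by auto
      then show "z \<in> g ` column V E x"
        using perp_g z by (auto simp: column_def)
    qed
  qed
qed

text \<open>Outside its column every vertex is joined to u by exactly one edge, so agreeing on
  out-edges to u forces agreement on in-edges.\<close>
lemma in_edge_iff_if_out_edge_iff:
  assumes sg: "semigeneric V E" and V: "x \<in> V" "b \<in> V" "u \<in> V"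
    and xb: "perp E x b" and xu: "\<not> perp E x u" and out: "E x u \<longleftrightarrow> E b u"
  shows "E u x \<longleftrightarrow> E u b"
proof -
  have "\<not> perp E b u"
    using xu semigeneric_perp_trans[OF sg V(1,2,3) xb] by blast
  then show ?thesis
    using xu out semigeneric_asym[OF sg V(1,3)] semigeneric_asym[OF sg V(2,3)]
    unfolding perp_def by blast
qed

lemma exists_aut_fixing_moving_in_column:
  assumes sg: "semigeneric V E" and F: "finite F" "F \<subseteq> V" "column V E x \<inter> F = {}"
    and x: "x \<in> V" and b: "b \<in> column V E x" "\<forall>u\<in>F. E x u \<longleftrightarrow> E b u"
  shows "\<exists>g. is_aut V E g \<and> (\<forall>y\<in>F. g y = y) \<and> g x = b"
proof -
  have bV: "b \<in> V" and xb: "perp E x b"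
    using b(1) by (auto simp: column_def)
  have xF: "x \<notin> F" and bF: "b \<notin> F"
    using F(3) b(1) column_self[OF sg x] by auto
  have in_edges: "E u x \<longleftrightarrow> E u b" if "u \<in> F" for u
    using in_edge_iff_if_out_edge_iff[OF sg x bV _ xb] F that b(2) by (auto simp: column_def)
  define f where "f y = (if y = x then b else y)" for y
  have "bij_betw f (insert x F) (insert b F)"
    unfolding bij_betw_def inj_on_def f_def using xF bF by auto
  moreover have "\<forall>y\<in>insert x F. \<forall>z\<in>insert x F. E y z \<longleftrightarrow> E (f y) (f z)"
    using b(2) in_edges semigeneric_irrefl[OF sg x] semigeneric_irrefl[OF sg bV] xF
    by (simp add: f_def)
  ultimately obtain g where g: "is_aut V E g" "\<forall>y\<in>insert x F. g y = f y"
    using homogeneousD[OF semigeneric_homogeneous[OF sg], of "insert x F" "insert b F"] F(1,2) x bV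
    by blast
  then show ?thesis
    using xF by (auto simp: f_def)
qed

lemma infinite_orbit_column_stabiliser:
  assumes sg: "semigeneric V E" and F: "finite F" "F \<subseteq> V" "column V E x \<inter> F = {}"
    and x: "x \<in> V"
  shows "infinite {g x | g. is_aut V E g \<and> (\<forall>y\<in>F. g y = y) \<and>
                            g ` column V E x = column V E x}"
proof (rule infinite_super)
  show "infinite {b \<in> column V E x. \<forall>u\<in>F. E x u \<longleftrightarrow> E b u}"
    using infinite_agreeing_in_column[OF sg x F(1,2)] .
  show "{b \<in> column V E x. \<forall>u\<in>F. E x u \<longleftrightarrow> E b u} \<subseteq>
      {g x | g. is_aut V E g \<and> (\<forall>y\<in>F. g y = y) \<and> g ` column V E x = column V E x}"
  proof clarify
    fix b assume b: "b \<in> column V E x" "\<forall>u\<in>F. E x u \<longleftrightarrow> E b u"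
    then obtain g where g: "is_aut V E g" "\<forall>y\<in>F. g y = y" "g x = b"
      using exists_aut_fixing_moving_in_column[OF sg F x] by blast
    moreover have "g ` column V E x = column V E x"
      using aut_image_column[OF g(1) x] g(3) column_eq[OF sg x b(1)] by simp
    ultimately show "\<exists>g. b = g x \<and> is_aut V E g \<and> (\<forall>y\<in>F. g y = y) \<and>
                         g ` column V E x = column V E x"
      by blast
  qed
qed

theorem mainTheorem7:
  fixes V :: "'a set" and E :: "'a \<Rightarrow> 'a \<Rightarrow> bool"
  assumes "semigeneric V E"
  shows "(\<forall>a\<in>V. \<forall>us. set us \<subseteq> V - column V E a \<longrightarrow>
            infinite {b \<in> column V E a. \<forall>u\<in>set us. E a u \<longleftrightarrow> E b u})
       \<and> (\<forall>F c. finite F \<and> F \<subseteq> V \<and> c \<in> V \<and> column V E c \<inter> F = {} \<longrightarrow>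
            (\<forall>x\<in>column V E c.
               infinite {g x | g. is_aut V E g \<and> (\<forall>y\<in>F. g y = y) \<and>
                                  g ` column V E c = column V E c}))"
proof (intro conjI allI ballI impI)
  show "infinite {b \<in> column V E a. \<forall>u\<in>set us. E a u \<longleftrightarrow> E b u}"
    if "a \<in> V" "set us \<subseteq> V - column V E a" for a us
    using infinite_agreeing_in_column[OF assms] that by blast
  fix F c x
  assume F: "finite F \<and> F \<subseteq> V \<and> c \<in> V \<and> column V E c \<inter> F = {}"
    and x: "x \<in> column V E c"
  have "x \<in> V"
    using x by (simp add: column_def)
  moreover have "column V E x = column V E c"
    using F column_eq[OF assms _ x] by blast
  ultimately show "infinite {g x | g. is_aut V E g \<and> (\<forall>y\<in>F. g y = y) \<and>
                                      g ` column V E c = column V E c}"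
    using infinite_orbit_column_stabiliser[OF assms, of F x] F by simp
qed

end
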